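(* Let $\mathscr{G}_n$ be a simple, verbose $\upsilon$-reduction grammar. Then for each production $G_n \to \chi[\sigma_1]\cdots[\sigma_w]$ of $\mathscr{G}_n$ whose right-hand side has closure width $w$ (with head $\chi$), either $\chi = N$ or $\chi = f(\alpha_1,\dots,\alpha_m)$ for some function symbol $f$ of arity $m$ other than the closure symbol $\cdot[\cdot]$.
   Context: $\lambda\upsilon$-terms: $t ::= \underline{n} \mid \lambda t \mid t\,t \mid t[s]$; substitutions $s ::= t/ \mid \Uparrow(s) \mid\ \uparrow$; indices $\underline{n} ::= \underline{0} \mid \mathtt{S}\,\underline{n}$. The $\upsilon$-rules: $(a b)[s] \to a[s](b[s])$; $(\lambda a)[s] \to \lambda(a[\Uparrow(s)])$; $\underline{0}[a/] \to a$; $(\mathtt{S}\,\underline{n})[a/] \to \underline{n}$; $\underline{0}[\Uparrow(s)] \to \underline{0}$; $(\mathtt{S}\,\underline{n})[\Uparrow(s)] \to \underline{n}[s][\uparrow]$; $\underline{n}[\uparrow] \to \mathtt{S}\,\underline{n}$. A term normalises in $k$ steps if leftmost-outermost $\upsilon$-reduction reaches a $\upsilon$-normal form in exactly $k$ steps. $\mathscr{F}$ is the ranked alphabet of $\lambda\upsilon$ symbols (application, closure $\cdot[\cdot]$ binary; $\lambda$, $\cdot/$, $\Uparrow$, $\mathtt{S}$ unary; $\uparrow,\underline{0}$ constants); $\mathscr{T}_{\mathscr{F}}(X)$ is the set of terms over $\mathscr{F}$ with variables from $X$. In a regular tree grammar with productions $X\to\alpha$, $L(\alpha)$ is the set of ground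 terms derivable from $\alpha$; a non-terminal is unambiguous if each ground term has at most one derivation from it; a production $X\to\alpha$ is self-referencing if $X$ occurs in $\alpha$, regular otherwise. $\Lambda$ has productions $T \to N \mid \lambda T \mid T T \mid T[S]$, $S \to T/ \mid \Uparrow(S) \mid \uparrow$, $N \to \underline{0} \mid \mathtt{S} N$. A $\upsilon$-reduction grammar $\mathscr{G}_n$ has axiom $G_n$, non-terminals $\{T,S,N,G_0,\dots,G_n\}$, contains all productions of $\Lambda$, and each $G_k$ ($0\le k\le n$) is unambiguous with $L(G_k)$ the set of terms normalising in exactly $k$ steps. It is simple if its self-referencing productions are productions of $\Lambda$ or of the form $G_k \to \lambda G_k \mid G_0 G_k \mid G_k G_0$, and each regular production $G_k\to\alpha$ has $\alpha \in \mathscr{T}_{\mathscr{F}}(\{T,S,N,G_0,\dots,G_{k-1}\})$. It is verbose if none of its productions has the form $X \to G_k[\sigma_1]\cdots[\sigma_w]$ for some $k$ and $w\ge 0$. A term $\alpha$ has closure width $w$ if $w$ is the largest non-negative integer such that $\alpha = \chi[\sigma_1]\cdots[\sigma_w]$ for some term $\chi$ (the head) and terms $\sigma_1,\dots,\sigma_w$. *)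

theory Defs
  imports Main
begin

text \<open>Symbols: application (binary), closure (binary), lambda, slash (a/),
  lift (Uparrow), successor S (unary), shift (uparrow) and index 0 (constants).\<close>
datatype 'v rt =
    V 'v
  | Ap "'v rt" "'v rt"
  | Cl "'v rt" "'v rt"
  | Lm "'v rt"
  | Sl "'v rt"
  | Up "'v rt"
  | Sc "'v rt"
  | Sh
  | Z

datatype nt = NT | NS | NN | NG nat

fun is_idx :: "'v rt \<Rightarrow> bool" where
  "is_idx Z = True"
| "is_idx (Sc n) = is_idx n"
| "is_idx _ = False"

fun is_term :: "'v rt \<Rightarrow> bool" and is_subst :: "'v rt \<Rightarrow> bool" where
  "is_term (Lm a) = is_term a"
| "is_term (Ap a b) = (is_term a \<and> is_term b)"
| "is_term (Cl a s) = (is_term a \<and> is_subst s)"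
| "is_term Z = True"
| "is_term (Sc n) = is_idx n"
| "is_term _ = False"
| "is_subst (Sl a) = is_term a"
| "is_subst (Up s) = is_subst s"
| "is_subst Sh = True"
| "is_subst _ = False"

fun root_step :: "'v rt \<Rightarrow> 'v rt option" where
  "root_step (Cl (Ap a b) s) = Some (Ap (Cl a s) (Cl b s))"
| "root_step (Cl (Lm a) s) = Some (Lm (Cl a (Up s)))"
| "root_step (Cl Z (Sl a)) = Some a"
| "root_step (Cl (Sc n) (Sl a)) = (if is_idx n then Some n else None)"
| "root_step (Cl Z (Up s)) = Some Z"
| "root_step (Cl (Sc n) (Up s)) = (if is_idx n then Some (Cl (Cl n s) Sh) else None)"
| "root_step (Cl Z Sh) = Some (Sc Z)"
| "root_step (Cl (Sc n) Sh) = (if is_idx n then Some (Sc (Sc n)) else None)"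
| "root_step _ = None"

fun lo_step :: "'v rt \<Rightarrow> 'v rt option" where
  "lo_step (Ap a b) = (case lo_step a of Some a' \<Rightarrow> Some (Ap a' b)
                        | None \<Rightarrow> map_option (Ap a) (lo_step b))"
| "lo_step (Cl a s) = (case root_step (Cl a s) of Some u \<Rightarrow> Some u
                        | None \<Rightarrow> (case lo_step a of Some a' \<Rightarrow> Some (Cl a' s)
                                   | None \<Rightarrow> map_option (Cl a) (lo_step s)))"
| "lo_step (Lm a) = map_option Lm (lo_step a)"
| "lo_step (Sl a) = map_option Sl (lo_step a)"
| "lo_step (Up a) = map_option Up (lo_step a)"
| "lo_step (Sc a) = map_option Sc (lo_step a)"
| "lo_step (V x) = None"
| "lo_step Sh = None"
| "lo_step Z = None"

definition normalises_in :: "'v rt \<Rightarrow> nat \<Rightarrow> bool" where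
  "normalises_in t k \<longleftrightarrow> is_term t \<and>
     (\<exists>f. f 0 = t \<and> (\<forall>i<k. lo_step (f i) = Some (f (Suc i))) \<and> lo_step (f k) = None)"

type_synonym prod = "nt \<times> nt rt"

primrec rjoin :: "'a rt rt \<Rightarrow> 'a rt" where
  "rjoin (V t) = t"
| "rjoin (Ap a b) = Ap (rjoin a) (rjoin b)"
| "rjoin (Cl a b) = Cl (rjoin a) (rjoin b)"
| "rjoin (Lm a) = Lm (rjoin a)"
| "rjoin (Sl a) = Sl (rjoin a)"
| "rjoin (Up a) = Up (rjoin a)"
| "rjoin (Sc a) = Sc (rjoin a)"
| "rjoin Sh = Sh"
| "rjoin Z = Z"

text \<open>A derivation from non-terminal X: the right-hand side of the production
  used, with every non-terminal occurrence replaced by a sub-derivation.\<close>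
datatype dv = DV nt "dv rt"

primrec dnt :: "dv \<Rightarrow> nt" where
  "dnt (DV X \<beta>) = X"

primrec yield :: "dv \<Rightarrow> nt rt" where
  "yield (DV X \<beta>) = rjoin (map_rt yield \<beta>)"

inductive valid :: "prod set \<Rightarrow> dv \<Rightarrow> bool" for P where
  "(X, map_rt dnt \<beta>) \<in> P \<Longrightarrow> (\<And>d. d \<in> set_rt \<beta> \<Longrightarrow> valid P d) \<Longrightarrow> valid P (DV X \<beta>)"

definition Lang :: "prod set \<Rightarrow> nt \<Rightarrow> nt rt set" where
  "Lang P X = {yield d | d. valid P d \<and> dnt d = X}"

definition unambiguous :: "prod set \<Rightarrow> nt \<Rightarrow> bool" where
  "unambiguous P X \<longleftrightarrow> (\<forall>d1 d2. valid P d1 \<and> valid P d2 \<and> dnt d1 = X \<and> dnt d2 = X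
      \<and> yield d1 = yield d2 \<longrightarrow> d1 = d2)"

definition Lambda_prods :: "prod set" where
  "Lambda_prods = {(NT, V NN), (NT, Lm (V NT)), (NT, Ap (V NT) (V NT)), (NT, Cl (V NT) (V NS)),
                   (NS, Sl (V NT)), (NS, Up (V NS)), (NS, Sh),
                   (NN, Z), (NN, Sc (V NN))}"

definition NTs :: "nat \<Rightarrow> nt set" where
  "NTs n = {NT, NS, NN} \<union> NG ` {..n}"

definition ureduction_grammar :: "nat \<Rightarrow> prod set \<Rightarrow> bool" where
  "ureduction_grammar n P \<longleftrightarrow> finite P \<and> Lambda_prods \<subseteq> P \<and>
     (\<forall>(X, \<alpha>) \<in> P. X \<in> NTs n \<and> set_rt \<alpha> \<subseteq> NTs n) \<and>
     (\<forall>k\<le>n. unambiguous P (NG k) \<and> Lang P (NG k) = {t. normalises_in t k})"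

definition simple_grammar :: "nat \<Rightarrow> prod set \<Rightarrow> bool" where
  "simple_grammar n P \<longleftrightarrow>
     (\<forall>(X, \<alpha>) \<in> P. X \<in> set_rt \<alpha> \<longrightarrow>
        (X, \<alpha>) \<in> Lambda_prods \<or>
        (\<exists>k. (X, \<alpha>) = (NG k, Lm (V (NG k))) \<or> (X, \<alpha>) = (NG k, Ap (V (NG 0)) (V (NG k)))
             \<or> (X, \<alpha>) = (NG k, Ap (V (NG k)) (V (NG 0))))) \<and>
     (\<forall>k \<alpha>. (NG k, \<alpha>) \<in> P \<and> NG k \<notin> set_rt \<alpha> \<longrightarrow> set_rt \<alpha> \<subseteq> {NT, NS, NN} \<union> NG ` {..<k})"

text \<open>Head of a term: strip all outermost closures (closure width maximal).\<close>
fun chead :: "'v rt \<Rightarrow> 'v rt" where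
  "chead (Cl a s) = chead a"
| "chead t = t"

definition verbose_grammar :: "prod set \<Rightarrow> bool" where
  "verbose_grammar P \<longleftrightarrow> (\<forall>(X, \<alpha>) \<in> P. \<forall>k. chead \<alpha> \<noteq> V (NG k))"

fun nonclosure_app :: "'v rt \<Rightarrow> bool" where
  "nonclosure_app (V _) = False"
| "nonclosure_app (Cl _ _) = False"
| "nonclosure_app _ = True"

end

theory Submission
  imports Defs
begin

(* The head cannot be a closure, by maximality of the closure width, nor some G_k, by verbosity.
   Every non-terminal generates a term (G_k generates 0[\<up>]...[\<up>] with k closures), so fixing
   such terms for the non-terminals inside the \<sigma>_i yields ground substitutions \<tau>_i with
   t[\<tau>_1]...[\<tau>_w] in L(G_n) for every t in L(\<chi>).  For \<chi> = S this puts the substitution \<up> in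
   term position.  For \<chi> = T both 0[\<up>][\<tau>_1]...[\<tau>_w] and (S 0)[\<tau>_1]...[\<tau>_w] would be in L(G_n),
   yet the first reduces to the second in one leftmost-outermost step, so they cannot both
   normalise in n steps. *)

primrec lo_normalises_in :: "'v rt \<Rightarrow> nat \<Rightarrow> bool" where
  "lo_normalises_in t 0 \<longleftrightarrow> lo_step t = None"
| "lo_normalises_in t (Suc k) \<longleftrightarrow>
     (case lo_step t of None \<Rightarrow> False | Some t' \<Rightarrow> lo_normalises_in t' k)"

lemma lo_reduction_sequence_iff:
  "(\<exists>f. f 0 = t \<and> (\<forall>i<k. lo_step (f i) = Some (f (Suc i))) \<and> lo_step (f k) = None)
     \<longleftrightarrow> lo_normalises_in t k"
proof (induction k arbitrary: t)
  case 0
  then show ?case by auto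
next
  case (Suc k)
  show ?case
  proof
    assume "\<exists>f. f 0 = t \<and> (\<forall>i<Suc k. lo_step (f i) = Some (f (Suc i))) \<and> lo_step (f (Suc k)) = None"
    then obtain f where "f 0 = t" "\<forall>i<Suc k. lo_step (f i) = Some (f (Suc i))"
      "lo_step (f (Suc k)) = None"
      by blast
    moreover from this have "lo_normalises_in (f 1) k"
      by (intro iffD1[OF Suc.IH] exI[of _ "\<lambda>i. f (Suc i)"]) auto
    ultimately show "lo_normalises_in t (Suc k)" by force
  next
    assume "lo_normalises_in t (Suc k)"
    then obtain t' where t': "lo_step t = Some t'" "lo_normalises_in t' k"
      by (auto split: option.splits)
    then obtain g where "g 0 = t'" "\<forall>i<k. lo_step (g i) = Some (g (Suc i))" "lo_step (g k) = None"
      using Suc.IH by blast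
    with t' show "\<exists>f. f 0 = t \<and> (\<forall>i<Suc k. lo_step (f i) = Some (f (Suc i))) \<and> lo_step (f (Suc k)) = None"
      by (intro exI[of _ "case_nat t g"]) (auto simp: less_Suc_eq_0_disj)
  qed
qed

lemma normalises_in_iff: "normalises_in t k \<longleftrightarrow> is_term t \<and> lo_normalises_in t k"
  unfolding normalises_in_def lo_reduction_sequence_iff ..

lemma lo_normalises_in_Suc_step:
  "lo_step t = Some t' \<Longrightarrow> lo_normalises_in t (Suc k) \<longleftrightarrow> lo_normalises_in t' k"
  by simp

lemma lo_normalises_in_unique: "lo_normalises_in t k \<Longrightarrow> lo_normalises_in t k' \<Longrightarrow> k = k'"
proof (induction k arbitrary: t k')
  case 0
  then show ?case by (cases k') (auto split: option.splits)
next
  case (Suc k)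
  then show ?case by (cases k') (auto split: option.splits)
qed

lemma lo_step_foldl_Cl:
  assumes "lo_step (Cl a b) = Some u"
  shows "lo_step (foldl Cl (Cl a b) ss) = Some (foldl Cl u ss)"
proof (induction ss rule: rev_induct)
  case (snoc s ss)
  have "root_step (Cl (foldl Cl (Cl a b) ss) s) = None"
    by (cases ss rule: rev_cases) auto
  with snoc show ?case by simp
qed (use assms in simp)

lemma is_idx_funpow_Sc: "is_idx ((Sc ^^ j) Z)"
  by (induction j) auto

lemma is_term_foldl_Cl_Sh: "is_term (foldl Cl t (replicate k Sh)) \<longleftrightarrow> is_term t"
  by (induction k arbitrary: t) auto

lemma is_term_foldl_ClD: "is_term (foldl Cl t ss) \<Longrightarrow> is_term t"
  by (induction ss arbitrary: t) fastforce+

lemma lo_normalises_in_shifts: "lo_normalises_in (foldl Cl ((Sc ^^ j) Z) (replicate k Sh) :: 'v rt) k"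
proof (induction k arbitrary: j)
  case 0
  have "lo_step ((Sc ^^ j) Z :: 'v rt) = None" by (induction j) auto
  then show ?case by simp
next
  case (Suc k)
  have "lo_step (Cl ((Sc ^^ j) Z) Sh :: 'v rt) = Some ((Sc ^^ Suc j) Z)"
    using is_idx_funpow_Sc[of j] by (cases j) auto
  then have "lo_step (foldl Cl ((Sc ^^ j) Z) (replicate (Suc k) Sh) :: 'v rt)
      = Some (foldl Cl ((Sc ^^ Suc j) Z) (replicate k Sh))"
    unfolding replicate_Suc foldl_Cons by (rule lo_step_foldl_Cl)
  with Suc.IH[of "Suc j"] show ?case by (simp add: lo_normalises_in_Suc_step)
qed

lemma normalises_in_shifts: "normalises_in (foldl Cl Z (replicate k Sh)) k"
  using lo_normalises_in_shifts[of 0 k] by (simp add: normalises_in_iff is_term_foldl_Cl_Sh)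

lemma rjoin_foldl_Cl: "rjoin (foldl Cl h ss) = foldl Cl (rjoin h) (map rjoin ss)"
  by (induction ss arbitrary: h) auto

lemma map_rt_foldl_Cl: "map_rt f (foldl Cl h ss) = foldl Cl (map_rt f h) (map (map_rt f) ss)"
  by (induction ss arbitrary: h) auto

lemma set_rt_foldl_Cl: "set_rt (foldl Cl h ss) = set_rt h \<union> (\<Union>s\<in>set ss. set_rt s)"
  by (induction ss arbitrary: h) auto

(* \<beta> is a right-hand side in which every occurrence of a non-terminal Y is paired with a word of L(Y). *)
lemma Lang_production:
  assumes "(X, map_rt fst \<beta>) \<in> P" and "\<forall>(Y, t) \<in> set_rt \<beta>. t \<in> Lang P Y"
  shows "rjoin (map_rt snd \<beta>) \<in> Lang P X"
proof -
  have "\<forall>p \<in> set_rt \<beta>. \<exists>d. valid P d \<and> dnt d = fst p \<and> yield d = snd p"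
    using assms(2) unfolding Lang_def by fastforce
  then obtain d where d: "\<And>p. p \<in> set_rt \<beta> \<Longrightarrow> valid P (d p) \<and> dnt (d p) = fst p \<and> yield (d p) = snd p"
    by metis
  have "map_rt dnt (map_rt d \<beta>) = map_rt fst \<beta>"
    using d by (simp add: rt.map_comp cong: rt.map_cong)
  with assms(1) d have "valid P (DV X (map_rt d \<beta>))"
    by (intro valid.intros) (auto simp: rt.set_map)
  moreover have "yield (DV X (map_rt d \<beta>)) = rjoin (map_rt snd \<beta>)"
    using d by (simp add: rt.map_comp cong: rt.map_cong)
  ultimately show ?thesis
    unfolding Lang_def by force
qed

lemma Lang_Lambda_words:
  assumes "Lambda_prods \<subseteq> P"
  shows "Z \<in> Lang P NN" "Z \<in> Lang P NT" "Sc Z \<in> Lang P NT" "Sh \<in> Lang P NS" "Cl Z Sh \<in> Lang P NT"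
proof -
  have prods: "(NN, Z) \<in> P" "(NN, Sc (V NN)) \<in> P" "(NT, V NN) \<in> P" "(NS, Sh) \<in> P"
    "(NT, Cl (V NT) (V NS)) \<in> P"
    using assms unfolding Lambda_prods_def by auto
  show Z: "Z \<in> Lang P NN"
    using Lang_production[of _ Z] prods by simp
  show Z_NT: "Z \<in> Lang P NT"
    using Lang_production[of _ "V (NN, Z)"] prods Z by simp
  have "Sc Z \<in> Lang P NN"
    using Lang_production[of _ "Sc (V (NN, Z))"] prods Z by simp
  then show "Sc Z \<in> Lang P NT"
    using Lang_production[of _ "V (NN, Sc Z)"] prods by simp
  show Sh: "Sh \<in> Lang P NS"
    using Lang_production[of _ Sh] prods by simp
  show "Cl Z Sh \<in> Lang P NT"
    using Lang_production[of _ "Cl (V (NT, Z)) (V (NS, Sh))"] prods Z_NT Sh by simp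
qed

lemma Lang_nonempty:
  assumes "ureduction_grammar n P" and "Y \<in> NTs n"
  shows "Lang P Y \<noteq> {}"
proof (cases Y)
  case (NG k)
  with assms have "Lang P Y = {t. normalises_in t k}"
    unfolding ureduction_grammar_def NTs_def by auto
  then show ?thesis
    using normalises_in_shifts by blast
qed (use assms(1) Lang_Lambda_words[of P] in \<open>auto simp: ureduction_grammar_def\<close>)

lemma Lang_closure_context:
  assumes "(X, foldl Cl (V H) ss) \<in> P" and "\<forall>s \<in> set ss. \<forall>Y \<in> set_rt s. Lang P Y \<noteq> {}"
  shows "\<exists>ts. \<forall>t \<in> Lang P H. foldl Cl t ts \<in> Lang P X"
proof -
  define w where "w Y = (SOME t. t \<in> Lang P Y)" for Y
  define annotate where "annotate = map_rt (\<lambda>Y. (Y, w Y))"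
  have "foldl Cl t (map (rjoin \<circ> map_rt w) ss) \<in> Lang P X" if "t \<in> Lang P H" for t
  proof -
    have "\<forall>s \<in> set ss. \<forall>Y \<in> set_rt s. w Y \<in> Lang P Y"
      using assms(2) unfolding w_def by (metis some_in_eq)
    with that have "\<forall>(Y, u) \<in> set_rt (foldl Cl (V (H, t)) (map annotate ss)). u \<in> Lang P Y"
      by (auto simp: set_rt_foldl_Cl annotate_def rt.set_map)
    moreover have "map_rt fst (foldl Cl (V (H, t)) (map annotate ss)) = foldl Cl (V H) ss"
      by (simp add: map_rt_foldl_Cl annotate_def rt.map_comp comp_def rt.map_ident)
    moreover have "rjoin (map_rt snd (foldl Cl (V (H, t)) (map annotate ss)))
        = foldl Cl t (map (rjoin \<circ> map_rt w) ss)"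
      by (simp add: map_rt_foldl_Cl rjoin_foldl_Cl annotate_def rt.map_comp comp_def)
    ultimately show ?thesis
      using Lang_production[of X _ P] assms(1) by metis
  qed
  then show ?thesis by blast
qed

lemma chead_not_Cl: "chead t \<noteq> Cl a b"
  by (induction t rule: chead.induct) auto

lemma foldl_Cl_chead: "\<exists>ss. t = foldl Cl (chead t) ss"
proof (induction t)
  case (Cl a s)
  then obtain ss where "a = foldl Cl (chead a) ss" by blast
  then show ?case by (intro exI[of _ "ss @ [s]"]) simp
qed (auto intro: exI[of _ "[]"])

lemma production_head_context:
  assumes "ureduction_grammar n P" and "(X, \<alpha>) \<in> P" and "chead \<alpha> = V H"
  shows "\<exists>ts. \<forall>t \<in> Lang P H. foldl Cl t ts \<in> Lang P X"
proof -
  obtain ss where \<alpha>: "\<alpha> = foldl Cl (V H) ss"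
    using foldl_Cl_chead[of \<alpha>] assms(3) by metis
  have "set_rt \<alpha> \<subseteq> NTs n"
    using assms(1,2) unfolding ureduction_grammar_def by blast
  then have "\<forall>s \<in> set ss. \<forall>Y \<in> set_rt s. Lang P Y \<noteq> {}"
    using Lang_nonempty[OF assms(1)] by (auto simp: \<alpha> set_rt_foldl_Cl)
  with assms(2) show ?thesis
    unfolding \<alpha> by (rule Lang_closure_context)
qed

lemma Lang_NG_normalises_in:
  assumes "ureduction_grammar n P" and "(NG k, \<alpha>) \<in> P" and "t \<in> Lang P (NG k)"
  shows "normalises_in t k"
proof -
  have "k \<le> n"
    using assms(1,2) unfolding ureduction_grammar_def NTs_def by auto
  with assms(1,3) show ?thesis
    unfolding ureduction_grammar_def by blast
qed

lemma production_head_not_NS: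
  assumes "ureduction_grammar n P" and "(NG k, \<alpha>) \<in> P"
  shows "chead \<alpha> \<noteq> V NS"
proof
  assume "chead \<alpha> = V NS"
  then obtain ts where "\<forall>t \<in> Lang P NS. foldl Cl t ts \<in> Lang P (NG k)"
    using production_head_context assms by blast
  moreover have "Sh \<in> Lang P NS"
    using assms(1) Lang_Lambda_words unfolding ureduction_grammar_def by blast
  ultimately have "normalises_in (foldl Cl Sh ts) k"
    using Lang_NG_normalises_in assms by blast
  then show False
    using is_term_foldl_ClD unfolding normalises_in_def by fastforce
qed

lemma production_head_not_NT:
  assumes "ureduction_grammar n P" and "(NG k, \<alpha>) \<in> P"
  shows "chead \<alpha> \<noteq> V NT"
proof
  assume "chead \<alpha> = V NT"
  then obtain ts where ts: "\<forall>t \<in> Lang P NT. foldl Cl t ts \<in> Lang P (NG k)"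
    using production_head_context assms by blast
  have "Cl Z Sh \<in> Lang P NT" "Sc Z \<in> Lang P NT"
    using assms(1) Lang_Lambda_words unfolding ureduction_grammar_def by blast+
  then have before: "lo_normalises_in (foldl Cl (Cl Z Sh) ts) k"
    and after: "lo_normalises_in (foldl Cl (Sc Z) ts) k"
    using ts Lang_NG_normalises_in[OF assms] normalises_in_iff by blast+
  have step: "lo_step (foldl Cl (Cl Z Sh) ts) = Some (foldl Cl (Sc Z) ts)"
    by (rule lo_step_foldl_Cl) simp
  show False
  proof (cases k)
    case 0
    with before step show False by simp
  next
    case (Suc m)
    from before have shorter: "lo_normalises_in (foldl Cl (Sc Z) ts) m"
      unfolding Suc lo_normalises_in_Suc_step[OF step] .
    from lo_normalises_in_unique[OF after shorter] Suc show False
      by simp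
  qed
qed

theorem mainTheorem5:
  fixes n :: nat and P :: "prod set" and \<alpha> :: "nt rt"
  assumes "ureduction_grammar n P"
    and "simple_grammar n P"
    and "verbose_grammar P"
    and "(NG n, \<alpha>) \<in> P"
  shows "chead \<alpha> = V NN \<or> nonclosure_app (chead \<alpha>)"
proof (cases "chead \<alpha>")
  case (V X)
  moreover have "chead \<alpha> \<noteq> V (NG k)" for k
    using assms(3,4) unfolding verbose_grammar_def by auto
  ultimately show ?thesis
    using production_head_not_NS[OF assms(1,4)] production_head_not_NT[OF assms(1,4)]
    by (cases X) auto
next
  case (Cl a b)
  then show ?thesis using chead_not_Cl by metis
qed auto

end
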